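(* For every integer $n\ge 8$, $\bigl|\mathrm{LE}(n)\cap((n-1)!,\,n!]\bigr|<(n-3)!$.
   Context: All posets are finite. For a finite poset $P$, $\mathrm{ext}(P)$ denotes the number of linear extensions of $P$. For a positive integer $n$, $\mathrm{LE}(n)=\{\mathrm{ext}(P): P \text{ a poset with } |P|=n\}$. *)

theory Defs
  imports Main
begin

text \<open>A finite poset of size n is represented (up to isomorphism) as a partial order
  relation on the carrier {0..<n}. Its linear extensions are the linear orders on the
  same carrier containing it.\<close>

definition linear_extensions :: "nat set \<Rightarrow> nat rel \<Rightarrow> nat rel set" where
  "linear_extensions A r = {l. linear_order_on A l \<and> r \<subseteq> l}"

definition ext :: "nat set \<Rightarrow> nat rel \<Rightarrow> nat" where
  "ext A r = card (linear_extensions A r)"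

definition LE :: "nat \<Rightarrow> nat set" where
  "LE n = {ext {0..<n} r | r. partial_order_on {0..<n} r}"

end

theory Submission
  imports Defs
begin

(* Linear extensions satisfy e(P) = \<Sum> e(P - x) over the maximal elements x of P.  By induction
   along this recursion, a poset on n points with k non-isolated points has k * e(P) \<le> n!.  So if
   (n-1)! < e(P) \<le> n!, then P has an isolated point x, and e(P) = n * e(P - x) with
   (n-1)!/n < e(P - x) \<le> (n-1)!.  Hence each such value is n times either a value of the same kind
   for n - 1 or an integer in ((n-1)!/n, (n-2)!], which gives
   c(n) \<le> c(n-1) + (n-2)! - \<lfloor>(n-1)!/n\<rfloor> for the number c(n) of such values.  From c(1) = 0 this
   yields c(8) \<le> 117 < 5!, and the recurrence preserves c(n) < (n-3)! for n \<ge> 8. *)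

definition maximal_elements :: "'a set \<Rightarrow> 'a rel \<Rightarrow> 'a set" where
  "maximal_elements A r = {x\<in>A. \<forall>y\<in>A. (x, y) \<in> r \<longrightarrow> y = x}"

definition isolated_elements :: "'a set \<Rightarrow> 'a rel \<Rightarrow> 'a set" where
  "isolated_elements A r = {x\<in>A. \<forall>y\<in>A. y \<noteq> x \<longrightarrow> (x, y) \<notin> r \<and> (y, x) \<notin> r}"

lemmas order_on_defs = linear_order_on_def partial_order_on_def preorder_on_def
  refl_on_def trans_def antisym_def total_on_def

lemma isolated_elements_subset_maximal: "isolated_elements A r \<subseteq> maximal_elements A r"
  unfolding isolated_elements_def maximal_elements_def by auto

lemma maximal_elements_subset: "maximal_elements A r \<subseteq> A"
  unfolding maximal_elements_def by auto

lemma isolated_elements_subset: "isolated_elements A r \<subseteq> A"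
  unfolding isolated_elements_def by auto

lemma partial_order_on_Restr:
  "partial_order_on A r \<Longrightarrow> B \<subseteq> A \<Longrightarrow> partial_order_on B (Restr r B)"
  unfolding order_on_defs by blast

lemma linear_order_on_Restr_subset:
  "linear_order_on A l \<Longrightarrow> B \<subseteq> A \<Longrightarrow> linear_order_on B (Restr l B)"
  unfolding order_on_defs by blast

lemma linear_order_on_add_greatest:
  assumes "linear_order_on (A - {x}) l" "x \<in> A"
  shows "linear_order_on A (l \<union> A \<times> {x})"
  using assms unfolding order_on_defs by blast

lemma linear_order_on_has_greatest:
  assumes lin: "linear_order_on A l" and "finite A" "A \<noteq> {}"
  shows "\<exists>x\<in>A. \<forall>y\<in>A. (y, x) \<in> l"
proof -
  have "\<exists>x\<in>F. \<forall>y\<in>F. (y, x) \<in> l" if "finite F" "F \<noteq> {}" "F \<subseteq> A" for F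
    using that
  proof (induction F rule: finite_ne_induct)
    case (singleton x)
    then show ?case using lin by (auto simp: order_on_defs)
  next
    case (insert a F)
    then obtain t where t: "t \<in> F" "\<forall>y\<in>F. (y, t) \<in> l" by auto
    have "a \<in> A" "t \<in> A" "refl_on A l" "trans l" "total_on A l"
      using insert.prems \<open>t \<in> F\<close> lin by (auto simp: linear_order_on_def partial_order_on_def preorder_on_def)
    then have "(t, a) \<in> l \<or> (a, t) \<in> l" unfolding refl_on_def total_on_def by metis
    then show ?case
    proof
      assume "(t, a) \<in> l"
      with t \<open>refl_on A l\<close> \<open>trans l\<close> \<open>a \<in> A\<close> show ?case by (auto simp: refl_on_def dest: transD)
    next
      assume "(a, t) \<in> l"
      with t \<open>t \<in> F\<close> show ?case by auto
    qed
  qed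
  with assms show ?thesis by blast
qed

lemma finite_linear_extensions: "finite A \<Longrightarrow> finite (linear_extensions A r)"
  by (rule finite_subset[of _ "Pow (A \<times> A)"]) (auto simp: linear_extensions_def order_on_defs)

lemma card_linear_extensions_with_greatest:
  assumes r: "r \<subseteq> A \<times> A" and x: "x \<in> maximal_elements A r"
  shows "card {l \<in> linear_extensions A r. \<forall>y\<in>A. (y, x) \<in> l} = ext (A - {x}) (Restr r (A - {x}))"
  unfolding ext_def
proof (rule bij_betw_same_card, rule bij_betw_byWitness[where f' = "\<lambda>l. l \<union> A \<times> {x}"])
  have xA: "x \<in> A" using x by (simp add: maximal_elements_def)
  show "\<forall>l\<in>{l \<in> linear_extensions A r. \<forall>y\<in>A. (y, x) \<in> l}. Restr l (A - {x}) \<union> A \<times> {x} = l"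
    by (auto simp: linear_extensions_def order_on_defs)
  show "\<forall>l\<in>linear_extensions (A - {x}) (Restr r (A - {x})). Restr (l \<union> A \<times> {x}) (A - {x}) = l"
    by (auto simp: linear_extensions_def order_on_defs)
  show "(\<lambda>l. Restr l (A - {x})) ` {l \<in> linear_extensions A r. \<forall>y\<in>A. (y, x) \<in> l}
      \<subseteq> linear_extensions (A - {x}) (Restr r (A - {x}))"
    by (auto simp: linear_extensions_def intro: linear_order_on_Restr_subset)
  have "r \<subseteq> l \<union> A \<times> {x}" if "Restr r (A - {x}) \<subseteq> l" for l
    using that r x by (auto simp: maximal_elements_def)
  then show "(\<lambda>l. l \<union> A \<times> {x}) ` linear_extensions (A - {x}) (Restr r (A - {x}))
      \<subseteq> {l \<in> linear_extensions A r. \<forall>y\<in>A. (y, x) \<in> l}"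
    using xA by (auto simp: linear_extensions_def intro: linear_order_on_add_greatest)
qed

lemma ext_eq_sum_maximal:
  assumes "finite A" "A \<noteq> {}" and r: "r \<subseteq> A \<times> A"
  shows "ext A r = (\<Sum>x\<in>maximal_elements A r. ext (A - {x}) (Restr r (A - {x})))"
proof -
  define T where "T x = {l \<in> linear_extensions A r. \<forall>y\<in>A. (y, x) \<in> l}" for x
  have "linear_extensions A r \<subseteq> (\<Union>x\<in>maximal_elements A r. T x)"
  proof
    fix l assume l: "l \<in> linear_extensions A r"
    then have lin: "linear_order_on A l" and "r \<subseteq> l" by (auto simp: linear_extensions_def)
    obtain x where x: "x \<in> A" "\<forall>y\<in>A. (y, x) \<in> l"
      using linear_order_on_has_greatest[OF lin \<open>finite A\<close> \<open>A \<noteq> {}\<close>] by blast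
    have "antisym l" using lin by (simp add: linear_order_on_def partial_order_on_def)
    with x \<open>r \<subseteq> l\<close> have "x \<in> maximal_elements A r"
      by (auto simp: maximal_elements_def dest: antisymD)
    with l x show "l \<in> (\<Union>x\<in>maximal_elements A r. T x)" by (auto simp: T_def)
  qed
  then have partition: "linear_extensions A r = (\<Union>x\<in>maximal_elements A r. T x)"
    by (auto simp: T_def)
  have "ext A r = (\<Sum>x\<in>maximal_elements A r. card (T x))"
    unfolding ext_def partition
  proof (rule card_UN_disjoint)
    show "finite (maximal_elements A r)"
      using \<open>finite A\<close> maximal_elements_subset by (rule finite_subset[rotated])
    show "\<forall>x\<in>maximal_elements A r. finite (T x)"
      using finite_linear_extensions[OF \<open>finite A\<close>] by (simp add: T_def)
    show "\<forall>x\<in>maximal_elements A r. \<forall>y\<in>maximal_elements A r. x \<noteq> y \<longrightarrow> T x \<inter> T y = {}"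
      by (auto simp: T_def maximal_elements_def linear_extensions_def linear_order_on_def
          partial_order_on_def dest: antisymD)
  qed
  also have "\<dots> = (\<Sum>x\<in>maximal_elements A r. ext (A - {x}) (Restr r (A - {x})))"
    unfolding T_def using card_linear_extensions_with_greatest[OF r] by simp
  finally show ?thesis .
qed

lemma ext_empty: "ext {} {} = 1"
proof -
  have "linear_extensions {} {} = {{}}"
    unfolding linear_extensions_def linear_order_on_def partial_order_on_def preorder_on_def
    by (auto simp: refl_on_def total_on_def antisym_def trans_def)
  then show ?thesis by (simp add: ext_def)
qed

lemma ext_le_fact:
  assumes "finite A" "r \<subseteq> A \<times> A"
  shows "ext A r \<le> fact (card A)"
  using assms
proof (induction "card A" arbitrary: A r rule: less_induct)
  case less
  show ?case
  proof (cases "A = {}")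
    case True
    with less.prems show ?thesis by (simp add: ext_empty)
  next
    case False
    have "ext A r = (\<Sum>x\<in>maximal_elements A r. ext (A - {x}) (Restr r (A - {x})))"
      using ext_eq_sum_maximal[OF _ False] less.prems by blast
    also have "\<dots> \<le> (\<Sum>x\<in>maximal_elements A r. fact (card A - 1))"
    proof (rule sum_mono)
      fix x assume "x \<in> maximal_elements A r"
      then have x: "x \<in> A" using maximal_elements_subset[of A r] by blast
      have "ext (A - {x}) (Restr r (A - {x})) \<le> fact (card (A - {x}))"
        by (rule less.hyps) (use card_Diff1_less[OF \<open>finite A\<close> x] less.prems in auto)
      with x less.prems show "ext (A - {x}) (Restr r (A - {x})) \<le> fact (card A - 1)"
        by simp
    qed
    also have "\<dots> \<le> card A * fact (card A - 1)"
      using card_mono[OF \<open>finite A\<close> maximal_elements_subset] by simp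
    also have "\<dots> = fact (card A)"
      using False less.prems by (simp add: fact_reduce card_gt_0_iff)
    finally show ?thesis .
  qed
qed

lemma Restr_Restr_subset: "C \<subseteq> B \<Longrightarrow> Restr (Restr r B) C = Restr r C"
  by auto

lemma isolated_elements_remove:
  "x \<in> isolated_elements A r \<Longrightarrow> y \<noteq> x \<Longrightarrow> x \<in> isolated_elements (A - {y}) (Restr r (A - {y}))"
  unfolding isolated_elements_def by auto

lemma isolated_elements_remove_isolated:
  "x \<in> isolated_elements A r \<Longrightarrow>
    isolated_elements (A - {x}) (Restr r (A - {x})) = isolated_elements A r - {x}"
  unfolding isolated_elements_def by auto

lemma maximal_elements_remove_isolated:
  "x \<in> isolated_elements A r \<Longrightarrow>
    maximal_elements (A - {x}) (Restr r (A - {x})) = maximal_elements A r - {x}"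
  unfolding isolated_elements_def maximal_elements_def by auto

lemma ext_remove_isolated_eq_sum:
  assumes "finite A" "x \<in> isolated_elements A r" "A - {x} \<noteq> {}"
  shows "ext (A - {x}) (Restr r (A - {x}))
    = (\<Sum>y\<in>maximal_elements A r - {x}. ext (A - {x} - {y}) (Restr r (A - {x} - {y})))"
proof -
  have "ext (A - {x}) (Restr r (A - {x})) = (\<Sum>y\<in>maximal_elements (A - {x}) (Restr r (A - {x})).
      ext (A - {x} - {y}) (Restr (Restr r (A - {x})) (A - {x} - {y})))"
    using assms(1,3) by (intro ext_eq_sum_maximal) auto
  then show ?thesis
    using assms(2) by (simp add: maximal_elements_remove_isolated Restr_Restr_subset Diff_subset)
qed

lemma ext_isolated:
  assumes "finite A" "r \<subseteq> A \<times> A" "x \<in> isolated_elements A r"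
  shows "ext A r = card A * ext (A - {x}) (Restr r (A - {x}))"
  using assms
proof (induction "card A" arbitrary: A r rule: less_induct)
  case less
  let ?e = "\<lambda>y. ext (A - {y}) (Restr r (A - {y}))"
  let ?M = "maximal_elements A r"
  have x: "x \<in> A" "x \<in> ?M"
    using less.prems(3) isolated_elements_subset_maximal[of A r] maximal_elements_subset[of A r] by auto
  have finM: "finite ?M" using maximal_elements_subset[of A r] less.prems(1) by (rule finite_subset)
  have summand: "?e y = (card A - 1) * ext (A - {x} - {y}) (Restr r (A - {x} - {y}))"
    if y: "y \<in> ?M - {x}" for y
  proof -
    have "y \<in> A" using y maximal_elements_subset[of A r] by blast
    have "A - {y} - {x} = A - {x} - {y}" by blast
    moreover have "?e y = card (A - {y}) * ext (A - {y} - {x}) (Restr (Restr r (A - {y})) (A - {y} - {x}))"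
      by (rule less.hyps[OF card_Diff1_less[OF less.prems(1) \<open>y \<in> A\<close>]])
        (use less.prems y in \<open>auto intro: isolated_elements_remove\<close>)
    moreover have "Restr (Restr r (A - {y})) (A - {x} - {y}) = Restr r (A - {x} - {y})"
      by (rule Restr_Restr_subset) blast
    ultimately show ?thesis
      using \<open>y \<in> A\<close> less.prems(1) by simp
  qed
  have rest: "(\<Sum>y\<in>?M - {x}. ?e y) = (card A - 1) * ?e x"
  proof (cases "A - {x} = {}")
    case True
    then have "A = {x}" using x by blast
    then have "card A - 1 = 0" "?M - {x} = {}" using maximal_elements_subset[of A r] by auto
    then show ?thesis by (simp only: sum.empty mult_0)
  next
    case False
    then show ?thesis
      using ext_remove_isolated_eq_sum[OF less.prems(1,3) False] summand
      by (simp add: sum_distrib_left)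
  qed
  have "ext A r = (\<Sum>y\<in>?M. ?e y)"
    using x(1) less.prems by (intro ext_eq_sum_maximal) auto
  also have "\<dots> = ?e x + (\<Sum>y\<in>?M - {x}. ?e y)"
    by (rule sum.remove[OF finM x(2)])
  also have "\<dots> = card A * ?e x"
    using rest card_gt_0_iff[of A] less.prems(1) x(1) by (cases "card A") auto
  finally show ?case .
qed

lemma maximal_nonisolated_has_lower:
  assumes "y \<in> maximal_elements A r - isolated_elements A r"
  obtains w where "w \<in> A" "w \<noteq> y" "(w, y) \<in> r"
  using assms unfolding maximal_elements_def isolated_elements_def by blast

lemma related_not_isolated:
  "(w, v) \<in> r \<or> (v, w) \<in> r \<Longrightarrow> v \<in> B \<Longrightarrow> v \<noteq> w \<Longrightarrow> w \<notin> isolated_elements B (Restr r B)"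
  unfolding isolated_elements_def by auto

(* Deleting x keeps the other elements of M non-isolated, and an element below y takes the
   place of x. *)
lemma card_maximal_nonisolated_le:
  fixes A r
  defines "M \<equiv> maximal_elements A r - isolated_elements A r"
  assumes "finite A" "x \<in> M" "y \<in> M" "x \<noteq> y"
  shows "card M \<le> card (A - {x} - isolated_elements (A - {x}) (Restr r (A - {x})))"
    (is "_ \<le> card ?N")
proof -
  have "x \<in> maximal_elements A r" using \<open>x \<in> M\<close> by (simp add: M_def)
  have lower_in_N: "w \<in> ?N \<and> z \<in> ?N" if "z \<in> M - {x}" "w \<in> A" "w \<noteq> z" "(w, z) \<in> r" for z w
  proof -
    have "z \<in> A" "z \<noteq> x" using that(1) by (auto simp: M_def maximal_elements_def)
    moreover have "w \<noteq> x"
      using that \<open>x \<in> maximal_elements A r\<close> \<open>z \<in> A\<close> by (auto simp: maximal_elements_def)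
    moreover have "w \<notin> isolated_elements (A - {x}) (Restr r (A - {x}))"
      using that(3,4) \<open>z \<in> A\<close> \<open>z \<noteq> x\<close> by (intro related_not_isolated) auto
    moreover have "z \<notin> isolated_elements (A - {x}) (Restr r (A - {x}))"
      using that(2-4) \<open>w \<noteq> x\<close> by (intro related_not_isolated) auto
    ultimately show ?thesis using that(2) by blast
  qed
  have "M - {x} \<subseteq> ?N"
  proof
    fix z assume z: "z \<in> M - {x}"
    then obtain v where "v \<in> A" "v \<noteq> z" "(v, z) \<in> r"
      using maximal_nonisolated_has_lower[of z A r] by (auto simp: M_def)
    from lower_in_N[OF z this] show "z \<in> ?N" ..
  qed
  moreover obtain w where w: "w \<in> A" "w \<noteq> y" "(w, y) \<in> r"
    using maximal_nonisolated_has_lower[of y A r] \<open>y \<in> M\<close> by (auto simp: M_def)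
  moreover have "w \<notin> M"
    using w \<open>y \<in> M\<close> by (auto simp: M_def maximal_elements_def)
  moreover have "y \<in> M - {x}" using \<open>y \<in> M\<close> \<open>x \<noteq> y\<close> by blast
  ultimately have "insert w (M - {x}) \<subseteq> ?N" "w \<notin> M - {x}"
    using lower_in_N[of y w] by auto
  have "finite M" using \<open>finite A\<close> unfolding M_def maximal_elements_def by auto
  have "card M = card (insert w (M - {x}))"
    using card_Suc_Diff1[OF \<open>finite M\<close> \<open>x \<in> M\<close>] \<open>w \<notin> M - {x}\<close> \<open>finite M\<close> by simp
  also have "\<dots> \<le> card ?N"
    using \<open>insert w (M - {x}) \<subseteq> ?N\<close> \<open>finite A\<close> by (intro card_mono) auto
  finally show ?thesis .
qed

lemma ext_eq_sum_isolated_nonisolated: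
  assumes "finite A" "r \<subseteq> A \<times> A" "A \<noteq> {}"
  shows "ext A r = (\<Sum>y\<in>isolated_elements A r. ext (A - {y}) (Restr r (A - {y})))
    + (\<Sum>y\<in>maximal_elements A r - isolated_elements A r. ext (A - {y}) (Restr r (A - {y})))"
proof -
  have "finite (maximal_elements A r)"
    using assms(1) maximal_elements_subset by (rule finite_subset[rotated])
  with ext_eq_sum_maximal[OF assms(1,3,2)] show ?thesis
    using sum.subset_diff[OF isolated_elements_subset_maximal] by (simp add: add.commute)
qed

lemma sum_ext_nonisolated_maximal_le:
  assumes "finite A" "r \<subseteq> A \<times> A"
    and deletion_bound: "\<And>y. y \<in> A \<Longrightarrow>
      card (A - {y} - isolated_elements (A - {y}) (Restr r (A - {y}))) * ext (A - {y}) (Restr r (A - {y}))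
        \<le> fact (card A - 1)"
  shows "(\<Sum>y\<in>maximal_elements A r - isolated_elements A r. ext (A - {y}) (Restr r (A - {y})))
    \<le> fact (card A - 1)"
proof -
  let ?M = "maximal_elements A r - isolated_elements A r"
  let ?N = "\<lambda>y. A - {y} - isolated_elements (A - {y}) (Restr r (A - {y}))"
  let ?e = "\<lambda>y. ext (A - {y}) (Restr r (A - {y}))"
  let ?f = "fact (card A - 1) :: nat"
  have "finite ?M" using \<open>finite A\<close> by (auto simp: maximal_elements_def)
  have "card ?M * ?e y \<le> ?f" if "y \<in> ?M" for y
  proof (cases "card ?M \<le> 1")
    case True
    have "card ?M * ?e y \<le> 1 * ?e y" using True by (rule mult_le_mono1)
    also have "\<dots> \<le> ?f"
      using ext_le_fact[of "A - {y}" "Restr r (A - {y})"] assms(1,2) that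
      by (auto simp: maximal_elements_def)
    finally show ?thesis .
  next
    case False
    then obtain y' where "y' \<in> ?M" "y' \<noteq> y"
      using \<open>finite ?M\<close> \<open>y \<in> ?M\<close> by (auto simp: card_le_Suc0_iff_eq)
    then have "card ?M \<le> card (?N y)"
      using card_maximal_nonisolated_le[OF \<open>finite A\<close> that] by blast
    then have "card ?M * ?e y \<le> card (?N y) * ?e y" by (rule mult_le_mono1)
    also have "\<dots> \<le> ?f" using deletion_bound[of y] that by (simp add: maximal_elements_def)
    finally show ?thesis .
  qed
  then have "(\<Sum>y\<in>?M. card ?M * ?e y) \<le> (\<Sum>y\<in>?M. ?f)" by (rule sum_mono)
  then show ?thesis
  proof (cases "?M = {}")
    case True
    then show ?thesis by (simp only: sum.empty)
  next
    case False
    with \<open>finite ?M\<close> have "card ?M > 0" by (simp add: card_gt_0_iff)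
    with \<open>(\<Sum>y\<in>?M. card ?M * ?e y) \<le> (\<Sum>y\<in>?M. ?f)\<close> show ?thesis
      by (simp add: sum_distrib_left[symmetric])
  qed
qed

lemma nonisolated_mult_ext_le_fact:
  assumes "finite A" "r \<subseteq> A \<times> A"
  shows "card (A - isolated_elements A r) * ext A r \<le> fact (card A)"
  using assms
proof (induction "card A" arbitrary: A r rule: less_induct)
  case less
  let ?I = "isolated_elements A r"
  let ?M = "maximal_elements A r - ?I"
  let ?N = "\<lambda>y. A - {y} - isolated_elements (A - {y}) (Restr r (A - {y}))"
  let ?e = "\<lambda>y. ext (A - {y}) (Restr r (A - {y}))"
  let ?k = "card (A - ?I)"
  let ?f = "fact (card A - 1) :: nat"
  show ?case
  proof (cases "A - ?I = {}")
    case True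
    then show ?thesis unfolding True by simp
  next
    case False
    have "finite ?I" using less.prems(1) isolated_elements_subset by (rule finite_subset[rotated])
    have IH: "card (?N y) * ?e y \<le> ?f" if "y \<in> A" for y
    proof -
      have "card (?N y) * ?e y \<le> fact (card (A - {y}))"
        by (rule less.hyps[OF card_Diff1_less[OF less.prems(1) that]]) (use less.prems in auto)
      then show ?thesis using less.prems(1) that by simp
    qed
    have "(\<Sum>y\<in>?I. ?k * ?e y) \<le> (\<Sum>y\<in>?I. ?f)"
    proof (rule sum_mono)
      fix y assume "y \<in> ?I"
      then have "?N y = A - ?I" using isolated_elements_remove_isolated[of y A r] by auto
      moreover have "y \<in> A" using \<open>y \<in> ?I\<close> isolated_elements_subset[of A r] by blast
      ultimately show "?k * ?e y \<le> ?f" using IH[of y] by simp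
    qed
    then have isolated_part: "?k * (\<Sum>y\<in>?I. ?e y) \<le> card ?I * ?f" by (simp add: sum_distrib_left)
    have maximal_part: "(\<Sum>y\<in>?M. ?e y) \<le> ?f"
      using less.prems IH by (rule sum_ext_nonisolated_maximal_le)
    have "A \<noteq> {}" using False by blast
    with less.prems have "ext A r = (\<Sum>y\<in>?I. ?e y) + (\<Sum>y\<in>?M. ?e y)"
      by (rule ext_eq_sum_isolated_nonisolated)
    then have "?k * ext A r = ?k * (\<Sum>y\<in>?I. ?e y) + ?k * (\<Sum>y\<in>?M. ?e y)"
      by (simp add: add_mult_distrib2)
    also have "\<dots> \<le> card ?I * ?f + ?k * ?f"
      using isolated_part mult_le_mono2[OF maximal_part] by (rule add_mono)
    also have "\<dots> = card A * ?f"
      using card_Diff_subset[OF \<open>finite ?I\<close> isolated_elements_subset]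
        card_mono[OF less.prems(1) isolated_elements_subset]
      by (simp add: add_mult_distrib[symmetric])
    also have "\<dots> = fact (card A)"
      using \<open>A \<noteq> {}\<close> less.prems(1) by (simp add: fact_reduce card_gt_0_iff)
    finally show ?thesis .
  qed
qed

lemma ext_gt_fact_has_isolated:
  assumes "finite A" "r \<subseteq> A \<times> A" "fact (card A - 1) < ext A r"
  shows "isolated_elements A r \<noteq> {}"
proof
  assume "isolated_elements A r = {}"
  then have "card A * ext A r \<le> fact (card A)"
    using nonisolated_mult_ext_le_fact[OF assms(1,2)] by simp
  moreover have "A \<noteq> {}"
  proof
    assume "A = {}"
    with assms(2,3) show False by (simp add: ext_empty)
  qed
  then have "card A > 0" using assms(1) by (simp add: card_gt_0_iff)
  ultimately have "card A * ext A r \<le> card A * fact (card A - 1)" by (simp add: fact_reduce)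
  with assms(3) \<open>card A > 0\<close> show False by simp
qed

(* Carriers are arbitrary finite sets of naturals, so that deleting a point stays in the family. *)
definition ext_values :: "nat \<Rightarrow> nat set" where
  "ext_values k = {ext B s | B s. finite B \<and> card B = k \<and> partial_order_on B s}"

definition large_ext_values :: "nat \<Rightarrow> nat set" where
  "large_ext_values k = ext_values k \<inter> {fact (k - 1)<..fact k}"

lemma finite_large_ext_values: "finite (large_ext_values k)"
  unfolding large_ext_values_def by simp

lemma large_ext_values_subset:
  assumes "n \<ge> 2"
  shows "large_ext_values n \<subseteq> (\<lambda>m. n * m) ` (large_ext_values (n - 1) \<union> {fact (n - 1) div n<..fact (n - 2)})"
proof
  fix v assume "v \<in> large_ext_values n"
  then obtain B s where v: "v = ext B s" and B: "finite B" "card B = n" and s: "partial_order_on B s"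
    and v_bounds: "fact (n - 1) < v" "v \<le> fact n"
    unfolding large_ext_values_def ext_values_def by auto
  have s_sub: "s \<subseteq> B \<times> B" using s by (simp add: partial_order_on_def preorder_on_def)
  have "isolated_elements B s \<noteq> {}"
    using ext_gt_fact_has_isolated[OF B(1) s_sub] B(2) v v_bounds by simp
  then obtain x where x: "x \<in> isolated_elements B s" by blast
  then have "x \<in> B" using isolated_elements_subset[of B s] by blast
  define m where "m = ext (B - {x}) (Restr s (B - {x}))"
  have "v = n * m" unfolding m_def v using ext_isolated[OF B(1) s_sub x] B(2) by simp
  have s': "partial_order_on (B - {x}) (Restr s (B - {x}))" using s by (rule partial_order_on_Restr) blast
  have B': "card (B - {x}) = n - 1" using B \<open>x \<in> B\<close> by simp
  have "m \<in> ext_values (n - 1)" unfolding ext_values_def m_def using B(1) s' B' by blast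
  moreover have "m \<le> fact (n - 1)"
    using ext_le_fact[of "B - {x}" "Restr s (B - {x})"] B(1) B' unfolding m_def by auto
  moreover have "fact (n - 1) div n < m"
  proof (rule ccontr)
    assume "\<not> fact (n - 1) div n < m"
    then have "n * m \<le> n * (fact (n - 1) div n)" by simp
    also have "\<dots> \<le> fact (n - 1)" by simp
    finally show False using v_bounds \<open>v = n * m\<close> by simp
  qed
  moreover have "n - 1 - 1 = n - 2" by simp
  ultimately have "m \<in> large_ext_values (n - 1) \<union> {fact (n - 1) div n<..fact (n - 2)}"
    unfolding large_ext_values_def by auto
  with \<open>v = n * m\<close> show "v \<in> (\<lambda>m. n * m) ` (large_ext_values (n - 1) \<union> {fact (n - 1) div n<..fact (n - 2)})"
    by blast
qed

lemma card_large_ext_values_step: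
  assumes "n \<ge> 2"
  shows "card (large_ext_values n) \<le> card (large_ext_values (n - 1)) + (fact (n - 2) - fact (n - 1) div n)"
proof -
  have "card (large_ext_values n)
      \<le> card ((\<lambda>m. n * m) ` (large_ext_values (n - 1) \<union> {fact (n - 1) div n<..fact (n - 2)}))"
    by (rule card_mono[OF _ large_ext_values_subset[OF assms]]) (simp add: finite_large_ext_values)
  also have "\<dots> \<le> card (large_ext_values (n - 1) \<union> {fact (n - 1) div n<..fact (n - 2)})"
    by (rule card_image_le) (simp add: finite_large_ext_values)
  also have "\<dots> \<le> card (large_ext_values (n - 1)) + card {fact (n - 1) div n<..fact (n - 2) :: nat}"
    by (rule card_Un_le)
  finally show ?thesis by simp
qed

(* The increments (n-2)! - (n-1)! div n for n = 2, ..., 8 are 1, 1, 1, 2, 4, 18, 90. *)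
lemma card_large_ext_values_8: "card (large_ext_values 8) \<le> 117"
proof -
  have "large_ext_values 1 = {}" unfolding large_ext_values_def by auto
  then have "card (large_ext_values 2) \<le> 1" using card_large_ext_values_step[of 2] by simp
  then have "card (large_ext_values 3) \<le> 2" using card_large_ext_values_step[of 3] by simp
  then have "card (large_ext_values 4) \<le> 3"
    using card_large_ext_values_step[of 4] by (simp add: fact_numeral)
  then have "card (large_ext_values 5) \<le> 5"
    using card_large_ext_values_step[of 5] by (simp add: fact_numeral)
  then have "card (large_ext_values 6) \<le> 9"
    using card_large_ext_values_step[of 6] by (simp add: fact_numeral)
  then have "card (large_ext_values 7) \<le> 27"
    using card_large_ext_values_step[of 7] by (simp add: fact_numeral)
  then show ?thesis
    using card_large_ext_values_step[of 8] by (simp add: fact_numeral)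
qed

lemma mult_fact_diff_div_le:
  "(m + 2) * (fact m - fact (m + 1) div (m + 2)) \<le> fact m + (m + 2 :: nat)"
proof -
  define a :: nat where "a = fact (m + 1)"
  have "(m + 2) * fact m = a + fact m" by (simp add: a_def)
  moreover have "(m + 2) * (a div (m + 2)) + a mod (m + 2) = a" by (rule mult_div_mod_eq)
  moreover have "a mod (m + 2) < m + 2" by simp
  moreover have "(m + 2) * (fact m - a div (m + 2)) = (m + 2) * fact m - (m + 2) * (a div (m + 2))"
    by (rule diff_mult_distrib2)
  ultimately show ?thesis unfolding a_def by linarith
qed

lemma card_large_ext_values_less:
  assumes "n \<ge> 8"
  shows "card (large_ext_values n) < fact (n - 3)"
proof -
  have "card (large_ext_values (k + 8)) < fact (k + 5)" for k
  proof (induction k)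
    case 0
    then show ?case using card_large_ext_values_8 by (simp add: fact_numeral)
  next
    case (Suc k)
    define f :: nat where "f = fact (k + 5)"
    define d :: nat where "d = fact (k + 7) - fact (k + 8) div (k + 9)"
    let ?c = "card (large_ext_values (k + 8))"
    let ?c' = "card (large_ext_values (k + 9))"
    have fact6: "fact (k + 6) = (k + 6) * f"
      unfolding f_def using fact_reduce[of "k + 6", where 'a = nat] by (simp add: add.commute)
    have fact7: "fact (k + 7) = (k + 7) * ((k + 6) * f)"
      unfolding fact6[symmetric] using fact_reduce[of "k + 7", where 'a = nat] by (simp add: add.commute)
    have "f > 0" by (simp add: f_def)
    have step: "?c' \<le> ?c + d"
      using card_large_ext_values_step[of "k + 9"] by (simp add: d_def add.commute)
    have d_bound: "(k + 9) * d \<le> (k + 7) * ((k + 6) * f) + (k + 9)"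
      using mult_fact_diff_div_le[of "k + 7"] fact7 by (simp add: d_def add.commute)
    have "(k + 9) * ?c + (k + 9) \<le> (k + 9) * f"
      using mult_le_mono2[OF Suc.IH[folded f_def, THEN Suc_leI], of "k + 9"] by simp
    then have "(k + 9) * ?c' \<le> (k + 9) * f + (k + 7) * ((k + 6) * f)"
      using mult_le_mono2[OF step, of "k + 9"] d_bound by (simp add: add_mult_distrib2)
    also have "\<dots> < (k + 9) * ((k + 6) * f)"
      using \<open>f > 0\<close> by (simp add: algebra_simps)
    finally have "?c' < (k + 6) * f" by simp
    moreover have "Suc k + 8 = k + 9" "Suc k + 5 = k + 6" by simp_all
    ultimately show ?case by (simp only: fact6)
  qed
  from this[of "n - 8"] show ?thesis using assms by (simp add: add.commute)
qed

theorem theorem1p3: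
  fixes n :: nat
  assumes "n \<ge> 8"
  shows "card (LE n \<inter> {fact (n - 1)<..fact n}) < fact (n - 3)"
proof -
  have "LE n \<inter> {fact (n - 1)<..fact n} \<subseteq> large_ext_values n"
    unfolding LE_def large_ext_values_def ext_values_def by fastforce
  then have "card (LE n \<inter> {fact (n - 1)<..fact n}) \<le> card (large_ext_values n)"
    by (rule card_mono[OF finite_large_ext_values])
  also have "\<dots> < fact (n - 3)" using card_large_ext_values_less[OF assms] .
  finally show ?thesis .
qed

end
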